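(* Let $d \ge 2$ and $N=(d-1)^2$. For ${\bm \theta}=(\theta_1,\ldots,\theta_N)\in\mathbb{R}^N$ let $H_d({\bm \theta})$ be the $d\times d$ matrix whose first row and first column consist entirely of $1$'s and whose lower-right $(d-1)\times(d-1)$ submatrix (the core) has entries $[H_d({\bm \theta})]_{i,j}=e^{\mathrm{i}\theta_{(i-2)(d-1)+(j-1)}}$ for $2\le i,j\le d$. Define $\mathcal{V}_d:\mathbb{R}^N\to\mathbb{R}$ by $$\mathcal{V}_d({\bm \theta})=\sum_{i\neq j}\big|[H_d({\bm \theta})H_d({\bm \theta})^*]_{i,j}\big|^2,$$ and consider the gradient system $\dot{{\bm \theta}}=\Phi_d({\bm \theta}):=-\nabla\mathcal{V}_d({\bm \theta})$. Suppose ${\bm \theta}_0$ is such that $H=H_d({\bm \theta}_0)$ is a complex Hadamard matrix, i.e. $HH^*=dI_d$ (so ${\bm \theta}_0$ is a fixed point of $\Phi_d$). Then the dimension of the center subspace of the linearization $D\Phi_d|_{{\bm \theta}_0}$ (the span of generalized eigenvectors for eigenvalues with zero real part; since $D\Phi_d|_{{\bm \theta}_0}$ is symmetric this is its kernel) equals the defect $d(H)$.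
   Context: The defect $d(H)$ of a $d\times d$ complex Hadamard matrix $H$ is the dimension of the real vector space of matrices $R\in M^{d\times d}(\mathbb{R})$ satisfying the real linear system: $[R]_{i,1}=0$ for $1\le i\le d$; $[R]_{1,j}=0$ for $2\le j\le d$; and $\sum_{k=1}^d [H]_{i,k}\overline{[H]_{j,k}}\big([R]_{i,k}-[R]_{j,k}\big)=0$ for all $1\le i<j\le d$ (each such complex equation imposing its real and imaginary parts). $^*$ denotes conjugate transpose. *)

theory Defs
  imports "HOL-Analysis.Analysis" "HOL-Library.Option_ord"
begin

definition adjoint_c :: "complex^'n^'n \<Rightarrow> complex^'n^'n" where
  "adjoint_c H = (\<chi> i j. cnj (H $ j $ i))"

definition complex_hadamard :: "complex^'n^'n::finite \<Rightarrow> bool" where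
  "complex_hadamard H \<longleftrightarrow> H ** adjoint_c H = mat (of_nat CARD('n))"

definition first_idx :: "'n::{finite,linorder}" where
  "first_idx = Min UNIV"

text \<open>Defect of a d x d complex Hadamard matrix: dimension of the real solution space of
  the linear system in the paper (a complex equation = 0 imposes its real and imaginary parts).\<close>
definition defect :: "((complex, 'n::{finite,linorder}) vec, 'n) vec \<Rightarrow> nat" where
  "defect H = dim {R.
      (\<forall>i. R $ i $ first_idx = 0) \<and>
      (\<forall>j. j \<noteq> first_idx \<longrightarrow> R $ first_idx $ j = 0) \<and>
      (\<forall>i j. i < j \<longrightarrow>
         (\<Sum>k\<in>UNIV. H $ i $ k * cnj (H $ j $ k) * complex_of_real (R $ i $ k - R $ j $ k)) = 0)}"

text \<open>Rows/columns are indexed by 'c option: None is the first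
  row/column (entries 1), Some a (a :: 'c) the rows/columns 2..d of the core; so d = CARD('c) + 1.
  The core parameters theta are indexed by the core positions ('c \<times> 'c), N = (d-1)^2.\<close>
definition Hd :: "real^('c::finite \<times> 'c) \<Rightarrow> complex^('c option)^('c option)" where
  "Hd \<theta> = (\<chi> i j. case (i, j) of (Some a, Some b) \<Rightarrow> cis (\<theta> $ (a, b)) | _ \<Rightarrow> 1)"

definition Vd :: "real^('c::finite \<times> 'c) \<Rightarrow> real" where
  "Vd \<theta> = (\<Sum>i\<in>UNIV. \<Sum>j\<in>UNIV - {i}. (cmod ((Hd \<theta> ** adjoint_c (Hd \<theta>)) $ i $ j))\<^sup>2)"

definition grad :: "(real^'m::finite \<Rightarrow> real) \<Rightarrow> real^'m \<Rightarrow> real^'m" where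
  "grad f x = (\<chi> k. frechet_derivative f (at x) (axis k 1))"

definition Phid :: "real^('c::finite \<times> 'c) \<Rightarrow> real^('c \<times> 'c)" where
  "Phid \<theta> = - grad Vd \<theta>"

definition center_subspace :: "real^'m^'m::finite \<Rightarrow> (real^'m) set" where
  "center_subspace M = {v. (\<chi> i. complex_of_real (v $ i)) \<in>
      vec.span {w :: complex^'m. \<exists>c k. Re c = 0 \<and>
        ((\<lambda>u. (\<chi> i j. complex_of_real (M $ i $ j)) *v u - c *s u) ^^ k) w = 0}}"

end

theory Submission
  imports Defs
begin

text \<open>Write the entries of \<open>H_d(\<theta>)\<close> as \<open>cis (\<rho>_ik \<theta>)\<close> with phases \<open>\<rho>_ik\<close> linear in \<open>\<theta>\<close>,
  so that \<open>V_d\<close> is the sum of \<open>|G_ij|^2\<close> over \<open>i \<noteq> j\<close>, where \<open>G_ij = \<Sum>_k cis (\<rho>_ik - \<rho>_jk)\<close>.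
  At a Hadamard point every off-diagonal \<open>G_ij\<close> vanishes, so the second-order terms drop out of
  the Hessian and \<open>D\<Phi>_d = -2 J^T J\<close>, where \<open>J\<close> is the Jacobian of the off-diagonal Gram entries.
  This matrix is symmetric, so its center subspace is its kernel, and negative semidefinite, so
  its kernel is \<open>ker J\<close>. Finally \<open>DG_ij v = i \<Sum>_k H_ik cnj(H_jk) (R_ik - R_jk)\<close> with
  \<open>R = (\<rho>_ik v)\<close>, and \<open>v \<mapsto> R\<close> is a linear bijection onto the real matrices with vanishing first
  row and column; hence \<open>ker J\<close> is isomorphic to the solution space defining the defect (the
  equation for \<open>(j, i)\<close> is minus the conjugate of the one for \<open>(i, j)\<close>).\<close>

text \<open>With \<open>y = A w\<close>: \<open>\<langle>y, y\<rangle> = \<langle>w, A y\<rangle> = c \<langle>w, y\<rangle>\<close>, and \<open>\<langle>w, A w\<rangle>\<close> is real, so \<open>\<langle>y, y\<rangle>\<close> is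
  both real nonnegative and imaginary.\<close>
lemma hermitian_image_eigenvector_imaginary_eq_0:
  fixes A :: "complex^'m^'m::finite"
  assumes hermitian: "\<And>p q. A $ p $ q = cnj (A $ q $ p)"
    and "Re c = 0" and "A *v (A *v w) = c *s (A *v w)"
  shows "A *v w = 0"
proof -
  define form :: "complex^'m \<Rightarrow> complex^'m \<Rightarrow> complex"
    where "form y z = (\<Sum>p\<in>UNIV. cnj (y $ p) * z $ p)" for y z
  have cnj_entry: "cnj (A $ q $ p) = A $ p $ q" for p q
    by (simp add: hermitian[of p q])
  have form_adjoint: "form y (A *v z) = form (A *v y) z" for y z
  proof -
    have "form y (A *v z) = (\<Sum>p\<in>UNIV. \<Sum>q\<in>UNIV. cnj (y $ p) * A $ p $ q * z $ q)"
      by (simp add: form_def matrix_vector_mult_def sum_distrib_left mult_ac)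
    also have "\<dots> = (\<Sum>q\<in>UNIV. \<Sum>p\<in>UNIV. cnj (y $ p) * A $ p $ q * z $ q)"
      by (rule sum.swap)
    also have "\<dots> = form (A *v y) z"
      by (simp add: form_def matrix_vector_mult_def sum_distrib_left sum_distrib_right cnj_entry mult_ac)
    finally show ?thesis .
  qed
  define y where "y = A *v w"
  have "form y y = form w (A *v y)"
    by (simp add: form_adjoint y_def)
  also have "\<dots> = c * form w y"
    using assms(3) by (simp add: y_def form_def sum_distrib_left mult_ac)
  finally have yy: "form y y = c * form w y" .
  have "cnj (form w y) = form y w"
    by (simp add: form_def mult.commute)
  also have "\<dots> = form w y"
    unfolding y_def by (rule form_adjoint[symmetric])
  finally have "Im (form w y) = 0"
    by (metis Reals_cnj_iff complex_is_Real_iff)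
  with yy \<open>Re c = 0\<close> have "Re (form y y) = 0"
    by simp
  moreover have "Re (form y y) = (\<Sum>p\<in>UNIV. (cmod (y $ p))\<^sup>2)"
    by (simp add: form_def Re_sum complex_mod_cnj mult.commute[of "cnj _"] flip: complex_norm_square)
  ultimately show ?thesis
    by (simp add: sum_nonneg_eq_0_iff vec_eq_iff y_def)
qed

lemma hermitian_generalized_eigenvector_imaginary_in_kernel:
  fixes A :: "complex^'m^'m::finite"
  assumes "\<And>p q. A $ p $ q = cnj (A $ q $ p)" and "Re c = 0"
    and "((\<lambda>u. A *v u - c *s u) ^^ k) w = 0"
  shows "A *v w = 0"
  using assms(3)
proof (induction k arbitrary: w)
  case (Suc k)
  then have "A *v (A *v w - c *s w) = 0"
    by (simp add: funpow_Suc_right del: funpow.simps)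
  then have "A *v (A *v w) = c *s (A *v w)"
    by (simp add: vec.diff vec.scale)
  then show ?case
    using hermitian_image_eigenvector_imaginary_eq_0 assms(1,2) by blast
qed simp

lemma center_subspace_symmetric:
  fixes M :: "real^'m^'m::finite"
  assumes "\<And>p q. M $ p $ q = M $ q $ p"
  shows "center_subspace M = {v. M *v v = 0}"
proof -
  define A :: "complex^'m^'m" where "A = (\<chi> i j. complex_of_real (M $ i $ j))"
  define S where "S = {w :: complex^'m. \<exists>c k. Re c = 0 \<and> ((\<lambda>u. A *v u - c *s u) ^^ k) w = 0}"
  have "S \<subseteq> {w. A *v w = 0}"
    using hermitian_generalized_eigenvector_imaginary_in_kernel[of A] assms by (auto simp: S_def A_def)
  moreover have "{w. A *v w = 0} \<subseteq> S"
  proof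
    fix w assume "w \<in> {w. A *v w = 0}"
    then show "w \<in> S"
      unfolding S_def by (intro CollectI exI[of _ 0] exI[of _ 1]) simp
  qed
  moreover have "vec.subspace {w. A *v w = 0}"
    by (simp add: vec.subspace_def vec.add vec.scale)
  ultimately have "vec.span S = {w. A *v w = 0}"
    using vec.span_minimal vec.span_superset by blast
  moreover have "A *v (\<chi> i. complex_of_real (v $ i)) = (\<chi> i. complex_of_real ((M *v v) $ i))" for v
    by (simp add: vec_eq_iff A_def matrix_vector_mult_def)
  ultimately show ?thesis
    unfolding center_subspace_def A_def[symmetric] S_def[symmetric]
    by (auto simp: vec_eq_iff)
qed

lemma vec_lambda_eq_sum_axis: "(\<chi> p. f p) = (\<Sum>p\<in>UNIV. (f p :: real) *\<^sub>R axis p 1)"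
  by (simp add: vec_eq_iff axis_def if_distrib cong: if_cong)

lemma linear_eq_sum_axis:
  fixes f :: "real^'n::finite \<Rightarrow> 'b::real_vector"
  assumes "linear f"
  shows "f v = (\<Sum>p\<in>UNIV. v $ p *\<^sub>R f (axis p 1))"
proof -
  have "f v = f (\<Sum>p\<in>UNIV. v $ p *\<^sub>R axis p 1)"
    by (simp flip: vec_lambda_eq_sum_axis)
  also have "\<dots> = (\<Sum>p\<in>UNIV. v $ p *\<^sub>R f (axis p 1))"
    using assms by (simp add: linear_sum linear_scale o_def)
  finally show ?thesis .
qed

lemma grad_has_derivative:
  assumes "(f has_derivative f') (at x)"
  shows "grad f x = (\<Sum>p\<in>UNIV. f' (axis p 1) *\<^sub>R axis p 1)"
  using frechet_derivative_at[OF assms] by (simp add: grad_def vec_lambda_eq_sum_axis)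

text \<open>The product rule when one factor vanishes: this is why only first derivatives of the
  Gram entries enter the Hessian of \<open>\<V>\<^sub>d\<close> at a Hadamard point.\<close>
lemma has_derivative_inner_vanishing:
  assumes "(f has_derivative f') (at x)" "(g has_derivative g') (at x)" "f x = 0"
  shows "((\<lambda>y. inner (f y) (g y)) has_derivative (\<lambda>h. inner (f' h) (g x))) (at x)"
  using has_derivative_inner[OF assms(1,2)] assms(3) by simp

definition phase :: "'c::finite option \<Rightarrow> 'c option \<Rightarrow> real^('c \<times> 'c) \<Rightarrow> real" where
  "phase i k \<theta> = (case (i, k) of (Some a, Some b) \<Rightarrow> \<theta> $ (a, b) | _ \<Rightarrow> 0)"

lemma phase_None1 [simp]: "phase None k \<theta> = 0"
  by (simp add: phase_def)

lemma phase_None2 [simp]: "phase i None \<theta> = 0"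
  by (cases i) (simp_all add: phase_def)

lemma phase_Some [simp]: "phase (Some a) (Some b) \<theta> = \<theta> $ (a, b)"
  by (simp add: phase_def)

lemma linear_phase: "linear (phase i k)"
  by (cases i; cases k) (auto simp: linear_iff)

lemma phase_has_derivative: "(phase i k has_derivative phase i k) F"
  by (simp add: bounded_linear_imp_has_derivative linear_phase flip: linear_conv_bounded_linear)

lemma Hd_eq_cis_phase: "Hd \<theta> $ i $ k = cis (phase i k \<theta>)"
  by (cases i; cases k) (simp_all add: Hd_def)

definition gram :: "'c::finite option \<Rightarrow> 'c option \<Rightarrow> real^('c \<times> 'c) \<Rightarrow> complex" where
  "gram i j \<theta> = (\<Sum>k\<in>UNIV. cis (phase i k \<theta> - phase j k \<theta>))"

definition dgram :: "'c::finite option \<Rightarrow> 'c option \<Rightarrow> real^('c \<times> 'c) \<Rightarrow> real^('c \<times> 'c) \<Rightarrow> complex"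
  where "dgram i j \<theta> v =
    (\<Sum>k\<in>UNIV. (phase i k v - phase j k v) *\<^sub>R (\<i> * cis (phase i k \<theta> - phase j k \<theta>)))"

lemma Hd_mult_adjoint: "(Hd \<theta> ** adjoint_c (Hd \<theta>)) $ i $ j = gram i j \<theta>"
  by (simp add: matrix_matrix_mult_def adjoint_c_def Hd_eq_cis_phase gram_def cis_cnj cis_mult)

lemma gram_offdiag_eq_0:
  assumes "complex_hadamard (Hd \<theta>)" "i \<noteq> j"
  shows "gram i j \<theta> = 0"
  using assms by (simp add: complex_hadamard_def flip: Hd_mult_adjoint) (simp add: mat_def)

lemma gram_has_derivative: "(gram i j has_derivative dgram i j \<theta>) (at \<theta>)"
  unfolding gram_def[abs_def] dgram_def[abs_def]
  by (intro has_derivative_sum has_derivative_cis has_derivative_diff phase_has_derivative)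

lemma linear_dgram: "linear (dgram i j \<theta>)"
  using gram_has_derivative has_derivative_linear by blast

lemma dgram_has_derivative:
  "((\<lambda>\<theta>. dgram i j \<theta> v) has_derivative (\<lambda>h. \<Sum>k\<in>UNIV. (phase i k v - phase j k v) *\<^sub>R
      (\<i> * ((phase i k h - phase j k h) *\<^sub>R (\<i> * cis (phase i k \<theta> - phase j k \<theta>)))))) (at \<theta>)"
  unfolding dgram_def
  by (intro has_derivative_sum has_derivative_scaleR_right has_derivative_mult_right
      has_derivative_cis has_derivative_diff phase_has_derivative)

definition dVd :: "real^('c::finite \<times> 'c) \<Rightarrow> real^('c \<times> 'c) \<Rightarrow> real" where
  "dVd \<theta> h = (\<Sum>i\<in>UNIV. \<Sum>j\<in>UNIV - {i}. 2 * inner (gram i j \<theta>) (dgram i j \<theta> h))"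

lemma Vd_eq_sum_gram: "Vd = (\<lambda>\<theta>. \<Sum>i\<in>UNIV. \<Sum>j\<in>UNIV - {i}. inner (gram i j \<theta>) (gram i j \<theta>))"
  by (simp add: Vd_def[abs_def] Hd_mult_adjoint power2_norm_eq_inner)

lemma Vd_has_derivative: "(Vd has_derivative dVd \<theta>) (at \<theta>)"
proof -
  have "((\<lambda>\<theta>. \<Sum>i\<in>UNIV. \<Sum>j\<in>UNIV - {i}. inner (gram i j \<theta>) (gram i j \<theta>)) has_derivative
      (\<lambda>h. \<Sum>i\<in>UNIV. \<Sum>j\<in>UNIV - {i}.
        inner (gram i j \<theta>) (dgram i j \<theta> h) + inner (dgram i j \<theta> h) (gram i j \<theta>))) (at \<theta>)"
    by (intro has_derivative_sum has_derivative_inner gram_has_derivative)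
  then show ?thesis
    by (simp add: Vd_eq_sum_gram dVd_def[abs_def] inner_commute[of "dgram _ _ _ _"])
qed

definition dPhid :: "real^('c::finite \<times> 'c) \<Rightarrow> real^('c \<times> 'c) \<Rightarrow> real^('c \<times> 'c)" where
  "dPhid \<theta> h = (\<chi> p. - (\<Sum>i\<in>UNIV. \<Sum>j\<in>UNIV - {i}.
      2 * inner (dgram i j \<theta> h) (dgram i j \<theta> (axis p 1))))"

lemma Phid_eq_sum_dVd: "Phid = (\<lambda>\<theta>. - (\<Sum>p\<in>UNIV. dVd \<theta> (axis p 1) *\<^sub>R axis p 1))"
  by (simp add: Phid_def[abs_def] grad_has_derivative[OF Vd_has_derivative])

lemma dPhid_eq_sum: "dPhid \<theta> = (\<lambda>h. - (\<Sum>p\<in>UNIV. (\<Sum>i\<in>UNIV. \<Sum>j\<in>UNIV - {i}.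
    2 * inner (dgram i j \<theta> h) (dgram i j \<theta> (axis p 1))) *\<^sub>R axis p 1))"
  by (simp add: dPhid_def[abs_def] vec_lambda_eq_sum_axis sum_negf)

lemma Phid_has_derivative:
  assumes "complex_hadamard (Hd \<theta>)"
  shows "(Phid has_derivative dPhid \<theta>) (at \<theta>)"
  unfolding Phid_eq_sum_dVd dPhid_eq_sum dVd_def
  by (intro has_derivative_minus has_derivative_sum has_derivative_scaleR_left
      has_derivative_mult_right has_derivative_inner_vanishing[OF gram_has_derivative
        dgram_has_derivative] gram_offdiag_eq_0[OF assms]) simp

lemma inner_dPhid_self:
  "inner v (dPhid \<theta> v) = - (\<Sum>i\<in>UNIV. \<Sum>j\<in>UNIV - {i}. 2 * inner (dgram i j \<theta> v) (dgram i j \<theta> v))"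
proof -
  have "inner v (dPhid \<theta> v) = - (\<Sum>p\<in>UNIV. \<Sum>i\<in>UNIV. \<Sum>j\<in>UNIV - {i}.
      2 * inner (dgram i j \<theta> v) (v $ p *\<^sub>R dgram i j \<theta> (axis p 1)))"
    by (simp add: inner_vec_def dPhid_def sum_distrib_left sum_negf mult_ac)
  also have "\<dots> = - (\<Sum>i\<in>UNIV. \<Sum>j\<in>UNIV - {i}. \<Sum>p\<in>UNIV.
      2 * inner (dgram i j \<theta> v) (v $ p *\<^sub>R dgram i j \<theta> (axis p 1)))"
    by (subst sum.swap) (rule arg_cong[where f = uminus] sum.cong refl sum.swap)+
  also have "\<dots> = - (\<Sum>i\<in>UNIV. \<Sum>j\<in>UNIV - {i}. 2 * inner (dgram i j \<theta> v) (dgram i j \<theta> v))"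
    by (simp add: linear_eq_sum_axis[OF linear_dgram, of _ _ _ v] inner_sum_right sum_distrib_left)
  finally show ?thesis .
qed

lemma dPhid_eq_0_iff: "dPhid \<theta> v = 0 \<longleftrightarrow> (\<forall>i j. i \<noteq> j \<longrightarrow> dgram i j \<theta> v = 0)"
proof
  assume "dPhid \<theta> v = 0"
  then have "(\<Sum>i\<in>UNIV. \<Sum>j\<in>UNIV - {i}. 2 * inner (dgram i j \<theta> v) (dgram i j \<theta> v)) = 0"
    using inner_dPhid_self[of v \<theta>] by simp
  then show "\<forall>i j. i \<noteq> j \<longrightarrow> dgram i j \<theta> v = 0"
    by (simp add: sum_nonneg_eq_0_iff sum_nonneg)
qed (simp add: vec_eq_iff dPhid_def)

lemma matrix_dPhid_symmetric: "matrix (dPhid \<theta>) $ p $ q = matrix (dPhid \<theta>) $ q $ p"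
  by (simp add: matrix_def dPhid_def inner_commute)

definition phase_matrix :: "real^('c::finite \<times> 'c) \<Rightarrow> real^('c option)^('c option)" where
  "phase_matrix v = (\<chi> i k. phase i k v)"

lemma linear_phase_matrix: "linear phase_matrix"
  by (auto simp: linear_iff vec_eq_iff phase_matrix_def phase_def split: option.split)

lemma inj_phase_matrix: "inj phase_matrix"
proof (rule injI)
  fix v w assume "phase_matrix v = phase_matrix w"
  then have "phase_matrix v $ Some a $ Some b = phase_matrix w $ Some a $ Some b" for a b
    by simp
  then show "v = w"
    by (auto simp: vec_eq_iff phase_matrix_def)
qed

lemma first_idx_eq_None: "(first_idx :: 'c::{finite,linorder} option) = None"
  unfolding first_idx_def by (rule Min_eqI) auto

lemma range_phase_matrix:
  "range (phase_matrix :: real^('c::{finite,linorder} \<times> 'c) \<Rightarrow> _) =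
    {R. (\<forall>i. R $ i $ first_idx = 0) \<and> (\<forall>j. j \<noteq> first_idx \<longrightarrow> R $ first_idx $ j = 0)}"
proof (intro set_eqI iffI)
  fix R :: "real^('c option)^('c option)"
  assume "R \<in> {R. (\<forall>i. R $ i $ first_idx = 0) \<and> (\<forall>j. j \<noteq> first_idx \<longrightarrow> R $ first_idx $ j = 0)}"
  then have "phase_matrix (\<chi> ab. R $ Some (fst ab) $ Some (snd ab)) = R"
    by (auto simp: vec_eq_iff phase_matrix_def phase_def first_idx_eq_None split: option.split)
      (metis option.exhaust)
  then show "R \<in> range phase_matrix"
    by (metis rangeI)
qed (auto simp: phase_matrix_def first_idx_eq_None)

definition defect_form :: "complex^'n^'n \<Rightarrow> real^'n^'n \<Rightarrow> 'n \<Rightarrow> 'n \<Rightarrow> complex" where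
  "defect_form H R i j = (\<Sum>k\<in>UNIV. H $ i $ k * cnj (H $ j $ k) * complex_of_real (R $ i $ k - R $ j $ k))"

lemma dgram_eq_defect_form: "dgram i j \<theta> v = \<i> * defect_form (Hd \<theta>) (phase_matrix v) i j"
  by (simp add: dgram_def defect_form_def phase_matrix_def Hd_eq_cis_phase cis_cnj cis_mult
      sum_distrib_left scaleR_conv_of_real mult_ac)

lemma dgram_eq_0_iff: "dgram i j \<theta> v = 0 \<longleftrightarrow> defect_form (Hd \<theta>) (phase_matrix v) i j = 0"
  by (simp add: dgram_eq_defect_form)

lemma defect_form_swap:
  fixes H :: "complex^'n^'n"
  shows "defect_form H R j i = - cnj (defect_form H R i j)"
  by (simp add: defect_form_def sum_negf[symmetric] algebra_simps)

lemma defect_form_offdiag_eq_0_iff: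
  fixes H :: "((complex, 'n::{finite,linorder}) vec, 'n) vec"
  shows "(\<forall>i j. i \<noteq> j \<longrightarrow> defect_form H R i j = 0) \<longleftrightarrow> (\<forall>i j. i < j \<longrightarrow> defect_form H R i j = 0)"
proof (intro iffI allI impI)
  fix i j :: 'n
  assume upper: "\<forall>i j. i < j \<longrightarrow> defect_form H R i j = 0" and "i \<noteq> j"
  then consider "i < j" | "j < i"
    by fastforce
  then show "defect_form H R i j = 0"
    by cases (use upper defect_form_swap[of H R i j] in auto)
qed auto

lemma defect_Hd_eq_dim_kernel:
  "defect (Hd \<theta>) = dim {v :: real^('c::{finite,linorder} \<times> 'c). \<forall>i j. i \<noteq> j \<longrightarrow> dgram i j \<theta> v = 0}"
proof -
  have "{R. (\<forall>i. R $ i $ first_idx = 0) \<and> (\<forall>j. j \<noteq> first_idx \<longrightarrow> R $ first_idx $ j = 0) \<and>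
      (\<forall>i j. i < j \<longrightarrow> defect_form (Hd \<theta>) R i j = 0)}
    = {R \<in> range phase_matrix. \<forall>i j. i < j \<longrightarrow> defect_form (Hd \<theta>) R i j = 0}"
    by (simp add: range_phase_matrix)
  also have "\<dots> = phase_matrix ` {v. \<forall>i j. i < j \<longrightarrow> defect_form (Hd \<theta>) (phase_matrix v) i j = 0}"
    by blast
  also have "\<dots> = phase_matrix ` {v. \<forall>i j. i \<noteq> j \<longrightarrow> dgram i j \<theta> v = 0}"
    by (simp only: dgram_eq_0_iff defect_form_offdiag_eq_0_iff)
  finally show ?thesis
    unfolding defect_def defect_form_def[symmetric]
    using dim_image_eq[OF linear_phase_matrix inj_on_subset[OF inj_phase_matrix subset_UNIV]]
    by simp
qed

theorem mainTheorem1: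
  fixes \<theta>0 :: "(real, 'c::{finite,linorder} \<times> 'c) vec"
  assumes "complex_hadamard (Hd \<theta>0)"
  shows "dim (center_subspace (matrix (frechet_derivative Phid (at \<theta>0)))) = defect (Hd \<theta>0)"
proof -
  have "frechet_derivative Phid (at \<theta>0) = dPhid \<theta>0"
    using frechet_derivative_at[OF Phid_has_derivative[OF assms]] by simp
  moreover have "linear (dPhid \<theta>0)"
    using Phid_has_derivative[OF assms] has_derivative_linear by blast
  then have "matrix (dPhid \<theta>0) *v v = dPhid \<theta>0 v" for v
    by (metis matrix_vector_mul(2))
  then have "center_subspace (matrix (dPhid \<theta>0)) = {v. dPhid \<theta>0 v = 0}"
    by (subst center_subspace_symmetric) (simp_all add: matrix_dPhid_symmetric)
  ultimately show ?thesis
    by (simp add: dPhid_eq_0_iff defect_Hd_eq_dim_kernel)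
qed

end
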